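(* For any special object $L$ of $\mathcal V$, the degree $\beta(L)$ of the minimal polynomial $m_L(x)$ satisfies $\beta(L)\equiv t\pmod 2$.
   Context: Let $\Bbbk$ be a field of characteristic $\neq2$, $t\in\{0,1\}$, and let $\mathcal{NB}_t$ be the nil-Brauer category, regarded as an ungraded strict $\Bbbk$-linear monoidal category (tensor $\star$, unit $\mathbb1$, composition $\circ$) generated by an object $B$ and morphisms $x:B\to B$, $\tau:B\star B\to B\star B$, $\cap:B\star B\to\mathbb1$, $\cup:\mathbb1\to B\star B$ with relations ($1=1_B$): $\tau\circ\tau=0$; $(\tau\star1)\circ(1\star\tau)\circ(\tau\star1)=(1\star\tau)\circ(\tau\star1)\circ(1\star\tau)$; $\cap\circ\cup=t1_{\mathbb1}$; $(\cap\star1)\circ(1\star\cup)=1=(1\star\cap)\circ(\cup\star1)$; $\cap\circ\tau=0$; $(1\star\cap)\circ(\tau\star1)=(\cap\star1)\circ(1\star\tau)$; $(x\star1)\circ\tau-\tau\circ(1\star x)=1\star1-\cup\circ\cap$; $\cap\circ(1\star x)=-\cap\circ(x\star1)$. Let $\mathcal V$ be a strict $\mathcal{NB}_t$-module category, i.e. a $\Bbbk$-linear category with a strict $\Bbbk$-linear monoidal functor $\mu$ from $\mathcal{NB}_t$ to the monoidal category of $\Bbbk$-linear endofunctors of $\mathcal V$; write $B$ for $\mu(B)$. An object $L$ is special if $\mathrm{End}_{\mathcal V}(L)=\Bbbk$ and $\mathrm{End}_{\mathcal V}(BL)$ is finite-dimensional; $m_L(x)$ is the minimal polynomial of $\mu(x)_L:BL\to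 BL$ (equal to $1$ if $BL=0$). *)

theory Defs
  imports "HOL-Computational_Algebra.Polynomial"
begin

text \<open>Objects are the elements of type 'o;
  morphisms live in a common type 'm, with hom-sets Hom a b.  Comp g f is g after f.\<close>

record ('o, 'm, 'k) kcat =
  Hom  :: "'o \<Rightarrow> 'o \<Rightarrow> 'm set"
  Comp :: "'m \<Rightarrow> 'm \<Rightarrow> 'm"
  Id   :: "'o \<Rightarrow> 'm"
  Add  :: "'m \<Rightarrow> 'm \<Rightarrow> 'm"
  Smul :: "'k \<Rightarrow> 'm \<Rightarrow> 'm"
  Zero :: "'o \<Rightarrow> 'o \<Rightarrow> 'm"

definition Sub :: "('o, 'm, 'k::field) kcat \<Rightarrow> 'm \<Rightarrow> 'm \<Rightarrow> 'm" where
  "Sub C f g = Add C f (Smul C (-1) g)"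

definition kcat :: "('o, 'm, 'k::field) kcat \<Rightarrow> bool" where
  "kcat C \<longleftrightarrow>
    (\<forall>a b. Zero C a b \<in> Hom C a b
       \<and> (\<forall>f\<in>Hom C a b. \<forall>g\<in>Hom C a b. Add C f g \<in> Hom C a b)
       \<and> (\<forall>c. \<forall>f\<in>Hom C a b. Smul C c f \<in> Hom C a b)
       \<and> (\<forall>f\<in>Hom C a b. \<forall>g\<in>Hom C a b. \<forall>h\<in>Hom C a b.
             Add C (Add C f g) h = Add C f (Add C g h))
       \<and> (\<forall>f\<in>Hom C a b. \<forall>g\<in>Hom C a b. Add C f g = Add C g f)
       \<and> (\<forall>f\<in>Hom C a b. Add C f (Zero C a b) = f)
       \<and> (\<forall>f\<in>Hom C a b. Add C f (Smul C (-1) f) = Zero C a b)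
       \<and> (\<forall>f\<in>Hom C a b. Smul C 1 f = f)
       \<and> (\<forall>c d. \<forall>f\<in>Hom C a b. Smul C c (Smul C d f) = Smul C (c * d) f)
       \<and> (\<forall>c d. \<forall>f\<in>Hom C a b. Smul C (c + d) f = Add C (Smul C c f) (Smul C d f))
       \<and> (\<forall>c. \<forall>f\<in>Hom C a b. \<forall>g\<in>Hom C a b.
             Smul C c (Add C f g) = Add C (Smul C c f) (Smul C c g)))
  \<and> (\<forall>a. Id C a \<in> Hom C a a)
  \<and> (\<forall>a b c. \<forall>f\<in>Hom C a b. \<forall>g\<in>Hom C b c. Comp C g f \<in> Hom C a c)
  \<and> (\<forall>a b c d. \<forall>f\<in>Hom C a b. \<forall>g\<in>Hom C b c. \<forall>h\<in>Hom C c d.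
        Comp C h (Comp C g f) = Comp C (Comp C h g) f)
  \<and> (\<forall>a b. \<forall>f\<in>Hom C a b. Comp C (Id C b) f = f \<and> Comp C f (Id C a) = f)
  \<and> (\<forall>a b c. \<forall>f\<in>Hom C a b. \<forall>g\<in>Hom C b c. \<forall>g'\<in>Hom C b c.
        Comp C (Add C g g') f = Add C (Comp C g f) (Comp C g' f))
  \<and> (\<forall>a b c. \<forall>f\<in>Hom C a b. \<forall>f'\<in>Hom C a b. \<forall>g\<in>Hom C b c.
        Comp C g (Add C f f') = Add C (Comp C g f) (Comp C g f'))
  \<and> (\<forall>a b c k. \<forall>f\<in>Hom C a b. \<forall>g\<in>Hom C b c.
        Comp C (Smul C k g) f = Smul C k (Comp C g f) \<and> Comp C g (Smul C k f) = Smul C k (Comp C g f))"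

definition klin_endofunctor :: "('o, 'm, 'k::field) kcat \<Rightarrow> ('o \<Rightarrow> 'o) \<Rightarrow> ('m \<Rightarrow> 'm) \<Rightarrow> bool" where
  "klin_endofunctor C Bo Bm \<longleftrightarrow>
     (\<forall>a b. \<forall>f\<in>Hom C a b. Bm f \<in> Hom C (Bo a) (Bo b))
   \<and> (\<forall>a. Bm (Id C a) = Id C (Bo a))
   \<and> (\<forall>a b c. \<forall>f\<in>Hom C a b. \<forall>g\<in>Hom C b c. Bm (Comp C g f) = Comp C (Bm g) (Bm f))
   \<and> (\<forall>a b. \<forall>f\<in>Hom C a b. \<forall>g\<in>Hom C a b. Bm (Add C f g) = Add C (Bm f) (Bm g))
   \<and> (\<forall>a b k. \<forall>f\<in>Hom C a b. Bm (Smul C k f) = Smul C k (Bm f))"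

text \<open>Since NB_t is the strict k-linear
  monoidal category presented by the generator B and the generating morphisms x, tau,
  cap, cup subject to the listed relations, a strict k-linear monoidal functor
  mu from NB_t to the k-linear endofunctors of C is the same as: a k-linear endofunctor
  B = mu(B) (here (Bo, Bm)) together with natural transformations
  x : B => B, tau : BB => BB, cap : BB => Id, cup : Id => BB (components indexed by
  objects) satisfying the relations, where the tensor product of endofunctors is
  composition, F*G = F o G, so that for natural transformations
  (f * 1_B)_L = f_(B L) and (1_B * g)_L = B(g_L).\<close>

definition NB_module :: "('o, 'm, 'k::field) kcat \<Rightarrow> nat \<Rightarrow> ('o \<Rightarrow> 'o) \<Rightarrow> ('m \<Rightarrow> 'm)
    \<Rightarrow> ('o \<Rightarrow> 'm) \<Rightarrow> ('o \<Rightarrow> 'm) \<Rightarrow> ('o \<Rightarrow> 'm) \<Rightarrow> ('o \<Rightarrow> 'm) \<Rightarrow> bool" where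
  "NB_module C t Bo Bm x tau cap cup \<longleftrightarrow>
     kcat C \<and> klin_endofunctor C Bo Bm
   \<and> (\<forall>L. x L \<in> Hom C (Bo L) (Bo L)
        \<and> tau L \<in> Hom C (Bo (Bo L)) (Bo (Bo L))
        \<and> cap L \<in> Hom C (Bo (Bo L)) L
        \<and> cup L \<in> Hom C L (Bo (Bo L)))
   \<comment> \<open>naturality\<close>
   \<and> (\<forall>a b. \<forall>f\<in>Hom C a b.
        Comp C (x b) (Bm f) = Comp C (Bm f) (x a)
      \<and> Comp C (tau b) (Bm (Bm f)) = Comp C (Bm (Bm f)) (tau a)
      \<and> Comp C (cap b) (Bm (Bm f)) = Comp C f (cap a)
      \<and> Comp C (cup b) f = Comp C (Bm (Bm f)) (cup a))
   \<comment> \<open>relations\<close>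
   \<and> (\<forall>L.
        Comp C (tau L) (tau L) = Zero C (Bo (Bo L)) (Bo (Bo L))
      \<and> Comp C (tau (Bo L)) (Comp C (Bm (tau L)) (tau (Bo L)))
          = Comp C (Bm (tau L)) (Comp C (tau (Bo L)) (Bm (tau L)))
      \<and> Comp C (cap L) (cup L) = Smul C (of_nat t) (Id C L)
      \<and> Comp C (cap (Bo L)) (Bm (cup L)) = Id C (Bo L)
      \<and> Comp C (Bm (cap L)) (cup (Bo L)) = Id C (Bo L)
      \<and> Comp C (cap L) (tau L) = Zero C (Bo (Bo L)) L
      \<and> Comp C (Bm (cap L)) (tau (Bo L)) = Comp C (cap (Bo L)) (Bm (tau L))
      \<and> Sub C (Comp C (x (Bo L)) (tau L)) (Comp C (tau L) (Bm (x L)))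
          = Sub C (Id C (Bo (Bo L))) (Comp C (cup L) (cap L))
      \<and> Comp C (cap L) (Bm (x L)) = Smul C (-1) (Comp C (cap L) (x (Bo L))))"

definition lin_comb :: "('o, 'm, 'k::field) kcat \<Rightarrow> 'o \<Rightarrow> 'o \<Rightarrow> ('k \<times> 'm) list \<Rightarrow> 'm" where
  "lin_comb C a b cs = foldr (\<lambda>(c, f) acc. Add C (Smul C c f) acc) cs (Zero C a b)"

definition fin_dim_hom :: "('o, 'm, 'k::field) kcat \<Rightarrow> 'o \<Rightarrow> 'o \<Rightarrow> bool" where
  "fin_dim_hom C a b \<longleftrightarrow> (\<exists>S. finite S \<and> S \<subseteq> Hom C a b \<and>
      (\<forall>f\<in>Hom C a b. \<exists>cs. set (map snd cs) \<subseteq> S \<and> f = lin_comb C a b cs))"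

definition special :: "('o, 'm, 'k::field) kcat \<Rightarrow> ('o \<Rightarrow> 'o) \<Rightarrow> 'o \<Rightarrow> bool" where
  "special C Bo L \<longleftrightarrow>
     Hom C L L = range (\<lambda>c. Smul C c (Id C L)) \<and> inj (\<lambda>c. Smul C c (Id C L))
   \<and> fin_dim_hom C (Bo L) (Bo L)"

definition mpow :: "('o, 'm, 'k::field) kcat \<Rightarrow> 'o \<Rightarrow> 'm \<Rightarrow> nat \<Rightarrow> 'm" where
  "mpow C a f n = ((\<lambda>g. Comp C f g) ^^ n) (Id C a)"

definition poly_eval :: "('o, 'm, 'k::field) kcat \<Rightarrow> 'o \<Rightarrow> 'k poly \<Rightarrow> 'm \<Rightarrow> 'm" where
  "poly_eval C a p f = lin_comb C a a (map (\<lambda>i. (coeff p i, mpow C a f i)) [0..<Suc (degree p)])"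

text \<open>The minimal polynomial: the monic polynomial of least degree annihilating f
  (this equals 1 when End(a) = 0, e.g. when B L = 0).\<close>

definition is_min_poly :: "('o, 'm, 'k::field) kcat \<Rightarrow> 'o \<Rightarrow> 'm \<Rightarrow> 'k poly \<Rightarrow> bool" where
  "is_min_poly C a f p \<longleftrightarrow>
     lead_coeff p = 1 \<and> poly_eval C a p f = Zero C a a
   \<and> (\<forall>q. lead_coeff q = 1 \<and> poly_eval C a q f = Zero C a a \<longrightarrow> degree p \<le> degree q)"

definition min_poly :: "('o, 'm, 'k::field) kcat \<Rightarrow> 'o \<Rightarrow> 'm \<Rightarrow> 'k poly" where
  "min_poly C a f = (THE p. is_min_poly C a f p)"

end

theory Submission
  imports Defs
begin

text \<open>
  Let \<open>m\<close> be the minimal polynomial of \<open>x\<^sub>L\<close> and \<open>d\<close> its degree. The dotted cups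
  \<open>w(p) = B(p(x\<^sub>L)) \<circ> cup\<^sub>L : L \<rightarrow> BBL\<close> satisfy \<open>w(p) = w(q)\<close> iff \<open>m\<close> divides \<open>p - q\<close>,
  because the mate \<open>cap\<^bsub>BL\<^esub> \<circ> B(w(p))\<close> of \<open>w(p)\<close> is \<open>p(x\<^sub>L)\<close>; so they form a copy of \<open>k[x]/(m)\<close>,
  realised as the polynomials of degree \<open>< d\<close>. Composition with \<open>\<tau>\<^sub>L\<close> maps dotted cups to
  dotted cups and squares to zero, which gives an operator \<open>T\<close> with \<open>T\<^sup>2 = 0\<close>. The bubble
  \<open>cap\<^sub>L \<circ> w(p)\<close> is a scalar \<open>\<phi>(p)\<close> because \<open>End(L) = k\<close>; it vanishes on the image of \<open>T\<close>
  since \<open>cap \<circ> \<tau> = 0\<close>, and \<open>\<phi>(1) = t\<close>. The dot-slide relation gives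
  \<open>T(x p) = \<phi>(p) - p - x T(p)\<close> modulo \<open>m\<close>, so \<open>p \<mapsto> \<phi>(p) - p\<close> maps \<open>ker T\<close> into \<open>im T\<close>;
  its kernel is \<open>0\<close> if \<open>t = 0\<close>, and lies in \<open>k \<cdot> 1\<close> with \<open>1 \<notin> im T\<close> if \<open>t = 1\<close>.
  Hence \<open>dim ker T = dim im T + t\<close>, and \<open>d = dim ker T + dim im T\<close> has the parity of \<open>t\<close>.
\<close>

section \<open>Dimension counting in finite-dimensional subspaces\<close>

context vector_space
begin

lemma span_inter_span_eq_zero:
  assumes indep: "independent (A \<union> B)" and disj: "A \<inter> B = {}"
    and fin: "finite A" "finite B"
    and v: "v \<in> span A" "v \<in> span B"
  shows "v = 0"
proof -
  obtain u where u: "v = (\<Sum>a\<in>A. u a *s a)" using v(1) span_finite[OF fin(1)] by auto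
  obtain u' where u': "v = (\<Sum>b\<in>B. u' b *s b)" using v(2) span_finite[OF fin(2)] by auto
  define g where "g y = (if y \<in> A then u y else - u' y)" for y
  have "(\<Sum>y\<in>A. g y *s y) = v" unfolding u g_def by (rule sum.cong) auto
  moreover have "(\<Sum>y\<in>B. g y *s y) = - v"
  proof -
    have "(\<Sum>y\<in>B. g y *s y) = (\<Sum>y\<in>B. - (u' y *s y))"
      using disj unfolding g_def by (intro sum.cong) auto
    then show ?thesis unfolding u' by (simp add: sum_negf)
  qed
  ultimately have "(\<Sum>y\<in>A \<union> B. g y *s y) = 0"
    by (simp add: sum.union_disjoint[OF fin disj])
  then have "\<And>y. y \<in> A \<Longrightarrow> g y = 0"
    using independentD[OF indep] fin by blast
  then show "v = 0" unfolding u g_def by simp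
qed

lemma card_le_dim_if_independent:
  assumes "independent S" "S \<subseteq> V" "finite F" "V \<subseteq> span F"
  shows "card S \<le> dim V"
proof -
  obtain B where B: "B \<subseteq> V" "independent B" "V \<subseteq> span B" "card B = dim V"
    by (rule basis_exists)
  have "finite B" using independent_span_bound[OF assms(3) B(2)] B(1) assms(4) by auto
  then show ?thesis
    using independent_span_bound[OF _ assms(1)] assms(2) B(3,4) by (metis subset_trans)
qed

lemma dim_le_dim_if_subset:
  assumes "U \<subseteq> V" "finite F" "V \<subseteq> span F"
  shows "dim U \<le> dim V"
proof -
  obtain B where "B \<subseteq> U" "independent B" "U \<subseteq> span B" "card B = dim U"
    by (rule basis_exists)
  then show ?thesis using card_le_dim_if_independent[of B V F] assms by auto
qed

lemma rank_nullity:
  assumes f: "Vector_Spaces.linear scale scale f" and V: "subspace V"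
    and fin: "finite F" "V \<subseteq> span F"
  shows "dim V = dim {v\<in>V. f v = 0} + dim (f ` V)"
proof -
  interpret f: Vector_Spaces.linear scale scale f by (rule f)
  let ?N = "{v\<in>V. f v = 0}"
  obtain B0 where B0: "B0 \<subseteq> ?N" "independent B0" "?N \<subseteq> span B0" "card B0 = dim ?N"
    by (rule basis_exists)
  have "B0 \<subseteq> V" using B0(1) by blast
  then obtain B where B: "B0 \<subseteq> B" "B \<subseteq> V" "independent B" "V \<subseteq> span B"
    using maximal_independent_subset_extend B0(2) by metis
  have "finite B" using independent_span_bound[OF fin(1) B(3)] B(2) fin(2) by auto
  define B1 where "B1 = B - B0"
  have fin01: "finite B0" "finite B1"
    using \<open>finite B\<close> B(1) finite_subset unfolding B1_def by auto
  have B01: "B = B0 \<union> B1" "B0 \<inter> B1 = {}" using B(1) unfolding B1_def by auto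
  have "span B1 \<subseteq> V" using B(2) V span_minimal unfolding B1_def by blast
  have inj: "inj_on f (span B1)"
    unfolding f.inj_on_iff_eq_0[OF subspace_span]
  proof (intro ballI impI)
    fix v assume v: "v \<in> span B1" "f v = 0"
    then have "v \<in> span B0" using \<open>span B1 \<subseteq> V\<close> B0(3) by auto
    then show "v = 0"
      using span_inter_span_eq_zero[OF _ B01(2) fin01] v(1) B(3) B01(1) by simp
  qed
  have "f ` B \<subseteq> span (f ` B1)"
    using B0(1) span_zero span_superset unfolding B1_def by fastforce
  then have "f ` V \<subseteq> span (f ` B1)"
    using f.spans_image[OF B(4)] span_minimal[OF _ subspace_span] by blast
  moreover have "independent (f ` B1)"
    using f.independent_injective_image[OF _ inj] independent_mono[OF B(3)]
    unfolding B1_def by blast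
  moreover have "f ` B1 \<subseteq> f ` V" using B(2) unfolding B1_def by blast
  ultimately have "card (f ` B1) = dim (f ` V)" using basis_card_eq_dim by blast
  moreover have "card (f ` B1) = card B1"
    using card_image[OF inj_on_subset[OF inj span_superset]] .
  moreover have "card B = dim V" using basis_card_eq_dim[OF B(2) B(4) B(3)] .
  ultimately show ?thesis using card_Un_disjoint[OF fin01 B01(2)] B01(1) B0(4) by simp
qed

lemma Suc_dim_le_dim_if_not_in_subspace:
  assumes I: "subspace I" "I \<subseteq> K" and e: "e \<in> K" "e \<notin> I"
    and fin: "finite F" "K \<subseteq> span F"
  shows "Suc (dim I) \<le> dim K"
proof -
  obtain B where B: "B \<subseteq> I" "independent B" "I \<subseteq> span B" "card B = dim I"
    by (rule basis_exists)
  have "finite B" using independent_span_bound[OF fin(1) B(2)] B(1) I(2) fin(2) by auto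
  have "e \<notin> span B" using span_minimal[OF B(1) I(1)] e(2) by blast
  then have "independent (insert e B)" using independent_insertI B(2) by blast
  moreover have "e \<notin> B" using \<open>e \<notin> span B\<close> span_base by blast
  then have "card (insert e B) = Suc (dim I)" using \<open>finite B\<close> B(4) by simp
  ultimately show ?thesis
    using card_le_dim_if_independent[of "insert e B" K F] B(1) I(2) e(1) fin by auto
qed

lemma dims_of_square_zero:
  assumes V: "subspace V" "finite F" "V \<subseteq> span F"
    and T: "Vector_Spaces.linear scale scale T" "T ` V \<subseteq> V" "\<And>v. v \<in> V \<Longrightarrow> T (T v) = 0"
    and \<sigma>: "Vector_Spaces.linear scale scale \<sigma>" "\<sigma> ` {v\<in>V. T v = 0} \<subseteq> T ` V"
  defines "K \<equiv> {v\<in>V. T v = 0}"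
  shows "dim V = dim K + dim (T ` V)" "dim (T ` V) \<le> dim K"
    "dim K \<le> dim {v\<in>K. \<sigma> v = 0} + dim (T ` V)"
proof -
  interpret T: Vector_Spaces.linear scale scale T by (rule T(1))
  have "K = V \<inter> {v. T v = 0}" unfolding K_def by blast
  then have K: "subspace K" "K \<subseteq> span F"
    using subspace_inter[OF V(1) T.subspace_kernel] V(3) by auto
  show "dim V = dim K + dim (T ` V)"
    using rank_nullity[OF T(1) V] unfolding K_def by simp
  have "T ` V \<subseteq> K" using T(2,3) unfolding K_def by auto
  then show "dim (T ` V) \<le> dim K" by (rule dim_le_dim_if_subset[OF _ V(2) K(2)])
  have "dim (\<sigma> ` K) \<le> dim (T ` V)"
    using dim_le_dim_if_subset[OF \<sigma>(2)[folded K_def] V(2)] V(3) T(2) by blast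
  then show "dim K \<le> dim {v\<in>K. \<sigma> v = 0} + dim (T ` V)"
    using rank_nullity[OF \<sigma>(1) K(1) V(2) K(2)] by linarith
qed

lemma dim_parity_of_square_zero:
  fixes T :: "'b \<Rightarrow> 'b" and \<phi> :: "'b \<Rightarrow> 'a"
  assumes V: "subspace V" "finite F" "V \<subseteq> span F"
    and T: "Vector_Spaces.linear scale scale T" "T ` V \<subseteq> V" "\<And>v. v \<in> V \<Longrightarrow> T (T v) = 0"
    and \<phi>: "\<And>u v. \<phi> (u + v) = \<phi> u + \<phi> v" "\<And>c v. \<phi> (c *s v) = c * \<phi> v"
      "\<And>v. v \<in> V \<Longrightarrow> \<phi> (T v) = 0"
    and e: "e \<in> V" "T e = 0"
    and shift: "\<And>v. v \<in> V \<Longrightarrow> T v = 0 \<Longrightarrow> \<phi> v *s e - v \<in> T ` V"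
  shows "\<phi> e \<noteq> 1 \<Longrightarrow> even (dim V)" and "\<phi> e \<noteq> 0 \<Longrightarrow> odd (dim V)"
proof -
  interpret T: Vector_Spaces.linear scale scale T by (rule T(1))
  define K where "K = {v\<in>V. T v = 0}"
  define \<sigma> where "\<sigma> v = \<phi> v *s e - v" for v
  have \<sigma>_linear: "Vector_Spaces.linear scale scale \<sigma>"
    unfolding Vector_Spaces.linear_iff \<sigma>_def using vector_space_axioms
    by (simp add: \<phi>(1,2) scale_left_distrib scale_right_diff_distrib)
  have "\<sigma> ` {v\<in>V. T v = 0} \<subseteq> T ` V" using shift unfolding \<sigma>_def by blast
  note dims = dims_of_square_zero[OF V T \<sigma>_linear this, folded K_def]
  have ker_\<sigma>: "\<phi> v *s e = v" "\<phi> v = \<phi> v * \<phi> e" if "\<sigma> v = 0" for v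
  proof -
    show v: "\<phi> v *s e = v" using that unfolding \<sigma>_def by simp
    show "\<phi> v = \<phi> v * \<phi> e" using arg_cong[where f = \<phi>, OF v] \<phi>(2) by simp
  qed
  show "even (dim V)" if "\<phi> e \<noteq> 1"
  proof -
    have "{v\<in>K. \<sigma> v = 0} \<subseteq> span {}"
    proof
      fix v assume "v \<in> {v\<in>K. \<sigma> v = 0}"
      then have "\<sigma> v = 0" by blast
      then have "\<phi> v = 0" using ker_\<sigma>(2) \<open>\<phi> e \<noteq> 1\<close> by (metis mult_cancel_left1)
      then show "v \<in> span {}" using ker_\<sigma>(1)[OF \<open>\<sigma> v = 0\<close>] by simp
    qed
    then have "dim {v\<in>K. \<sigma> v = 0} = 0" using dim_le_card[of _ "{}"] by simp
    then have "dim V = 2 * dim (T ` V)" using dims by linarith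
    then show ?thesis by simp
  qed
  show "odd (dim V)" if "\<phi> e \<noteq> 0"
  proof -
    have "{v\<in>K. \<sigma> v = 0} \<subseteq> span {e}"
    proof
      fix v assume "v \<in> {v\<in>K. \<sigma> v = 0}"
      then have "\<phi> v *s e = v" using ker_\<sigma>(1) by blast
      moreover have "\<phi> v *s e \<in> span {e}" by (intro span_scale span_base) simp
      ultimately show "v \<in> span {e}" by simp
    qed
    then have "dim {v\<in>K. \<sigma> v = 0} \<le> 1" using dim_le_card[of _ "{e}"] by simp
    moreover have "Suc (dim (T ` V)) \<le> dim K"
    proof (rule Suc_dim_le_dim_if_not_in_subspace[OF T.subspace_image[OF V(1)] _ _ _ V(2)])
      show "T ` V \<subseteq> K" "e \<in> K" "K \<subseteq> span F" using T(2,3) e V(3) unfolding K_def by auto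
      show "e \<notin> T ` V" using \<phi>(3) that by auto
    qed
    ultimately have "dim V = 2 * dim (T ` V) + 1" using dims by linarith
    then show ?thesis by simp
  qed
qed

end

section \<open>Polynomials of bounded degree\<close>

interpretation poly_vs: vector_space "smult :: 'a::field \<Rightarrow> 'a poly \<Rightarrow> 'a poly"
  by unfold_locales (simp_all add: smult_add_right smult_add_left)

lemma poly_vs_linearI:
  fixes f :: "'a::field poly \<Rightarrow> 'a poly"
  assumes "\<And>p q. f (p + q) = f p + f q" "\<And>c p. f (smult c p) = smult c (f p)"
  shows "Vector_Spaces.linear smult smult f"
  unfolding Vector_Spaces.linear_iff using assms poly_vs.vector_space_axioms by blast

definition polys_below :: "nat \<Rightarrow> 'a::zero poly set" where
  "polys_below n = {p. \<forall>i\<ge>n. coeff p i = 0}"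

lemma polys_below_iff: "p \<in> polys_below n \<longleftrightarrow> p = 0 \<or> degree p < n"
proof
  assume "p \<in> polys_below n"
  then have "coeff p (degree p) = 0" if "n \<le> degree p" using that unfolding polys_below_def by blast
  then show "p = 0 \<or> degree p < n" using leading_coeff_0_iff not_le by blast
next
  assume "p = 0 \<or> degree p < n"
  then show "p \<in> polys_below n" unfolding polys_below_def by (auto intro: coeff_eq_0)
qed

lemma subspace_polys_below: "poly_vs.subspace (polys_below n)"
  unfolding poly_vs.subspace_def polys_below_def by simp

lemma polys_below_eq_span_monoms:
  "polys_below n = poly_vs.span ((\<lambda>i. monom (1::'a::field) i) ` {..<n})"
proof
  show "poly_vs.span ((\<lambda>i. monom 1 i) ` {..<n}) \<subseteq> (polys_below n :: 'a poly set)"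
    by (rule poly_vs.span_minimal[OF _ subspace_polys_below]) (auto simp: polys_below_def coeff_monom)
  show "polys_below n \<subseteq> poly_vs.span ((\<lambda>i. monom (1::'a) i) ` {..<n})"
  proof
    fix p :: "'a poly" assume p: "p \<in> polys_below n"
    have "p = (\<Sum>i<n. smult (coeff p i) (monom 1 i))"
      using p by (intro poly_eqI) (auto simp: polys_below_def smult_monom coeff_sum coeff_monom not_less)
    also have "\<dots> \<in> poly_vs.span ((\<lambda>i. monom 1 i) ` {..<n})"
      by (intro poly_vs.span_sum poly_vs.span_scale poly_vs.span_base) auto
    finally show "p \<in> poly_vs.span ((\<lambda>i. monom 1 i) ` {..<n})" .
  qed
qed

lemma polys_below_subset_span: "polys_below n \<subseteq> poly_vs.span ((\<lambda>i. monom (1::'a::field) i) ` {..<n})"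
  by (simp add: polys_below_eq_span_monoms)

lemma inj_on_monom_1: "inj_on (\<lambda>i. monom (1::'a::{zero_neq_one}) i) A"
  by (auto simp: inj_on_def monom_eq_iff')

lemma independent_monoms: "poly_vs.independent ((\<lambda>i. monom (1::'a::field) i) ` {..<n})"
proof (rule poly_vs.independent_if_scalars_zero)
  fix g :: "'a poly \<Rightarrow> 'a" and p :: "'a poly"
  assume sum: "(\<Sum>q\<in>(\<lambda>i. monom 1 i) ` {..<n}. smult (g q) q) = 0"
    and p: "p \<in> (\<lambda>i. monom 1 i) ` {..<n}"
  obtain j where j: "j < n" "p = monom 1 j" using p by auto
  have "coeff (\<Sum>i<n. smult (g (monom 1 i)) (monom 1 i)) j = g p"
    using j by (simp add: smult_monom coeff_sum coeff_monom)
  then show "g p = 0" using sum unfolding sum.reindex[OF inj_on_monom_1] by simp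
qed simp

lemma dim_polys_below: "poly_vs.dim (polys_below n :: 'a::field poly set) = n"
proof -
  have "card ((\<lambda>i. monom (1::'a) i) ` {..<n}) = n" by (simp add: card_image inj_on_monom_1)
  then show ?thesis
    unfolding polys_below_eq_span_monoms poly_vs.dim_span_eq_card_independent[OF independent_monoms] .
qed

section \<open>Linear categories over a field\<close>

locale klinear_category =
  fixes C :: "('o, 'm, 'k::field) kcat"
  assumes kcat: "kcat C"
begin

lemma Zero_in [simp, intro]: "Zero C a b \<in> Hom C a b"
  using kcat unfolding kcat_def by simp
lemma Add_in [simp, intro]: "f \<in> Hom C a b \<Longrightarrow> g \<in> Hom C a b \<Longrightarrow> Add C f g \<in> Hom C a b"
  using kcat unfolding kcat_def by simp
lemma Smul_in [simp, intro]: "f \<in> Hom C a b \<Longrightarrow> Smul C c f \<in> Hom C a b"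
  using kcat unfolding kcat_def by simp
lemma Id_in [simp, intro]: "Id C a \<in> Hom C a a"
  using kcat unfolding kcat_def by simp
lemma Comp_in [intro]: "f \<in> Hom C a b \<Longrightarrow> g \<in> Hom C b c \<Longrightarrow> Comp C g f \<in> Hom C a c"
  using kcat unfolding kcat_def by simp

lemma Add_assoc:
  "f \<in> Hom C a b \<Longrightarrow> g \<in> Hom C a b \<Longrightarrow> h \<in> Hom C a b \<Longrightarrow>
    Add C (Add C f g) h = Add C f (Add C g h)"
  using kcat unfolding kcat_def by simp
lemma Add_commute: "f \<in> Hom C a b \<Longrightarrow> g \<in> Hom C a b \<Longrightarrow> Add C f g = Add C g f"
  using kcat unfolding kcat_def by simp
lemma Add_Zero: "f \<in> Hom C a b \<Longrightarrow> Add C f (Zero C a b) = f"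
  using kcat unfolding kcat_def by simp
lemma Add_neg: "f \<in> Hom C a b \<Longrightarrow> Add C f (Smul C (-1) f) = Zero C a b"
  using kcat unfolding kcat_def by simp
lemma Smul_one: "f \<in> Hom C a b \<Longrightarrow> Smul C 1 f = f"
  using kcat unfolding kcat_def by simp
lemma Smul_Smul: "f \<in> Hom C a b \<Longrightarrow> Smul C c (Smul C d f) = Smul C (c * d) f"
  using kcat unfolding kcat_def by simp
lemma Smul_add: "f \<in> Hom C a b \<Longrightarrow> Smul C (c + d) f = Add C (Smul C c f) (Smul C d f)"
  using kcat unfolding kcat_def by simp
lemma Smul_Add:
  "f \<in> Hom C a b \<Longrightarrow> g \<in> Hom C a b \<Longrightarrow> Smul C c (Add C f g) = Add C (Smul C c f) (Smul C c g)"
  using kcat unfolding kcat_def by simp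

lemma Comp_assoc:
  "f \<in> Hom C a b \<Longrightarrow> g \<in> Hom C b c \<Longrightarrow> h \<in> Hom C c d \<Longrightarrow>
    Comp C h (Comp C g f) = Comp C (Comp C h g) f"
  using kcat unfolding kcat_def by simp
lemma Id_Comp: "f \<in> Hom C a b \<Longrightarrow> Comp C (Id C b) f = f"
  using kcat unfolding kcat_def by simp
lemma Comp_Id: "f \<in> Hom C a b \<Longrightarrow> Comp C f (Id C a) = f"
  using kcat unfolding kcat_def by simp
lemma Comp_Add_left:
  "f \<in> Hom C a b \<Longrightarrow> g \<in> Hom C b c \<Longrightarrow> g' \<in> Hom C b c \<Longrightarrow>
    Comp C (Add C g g') f = Add C (Comp C g f) (Comp C g' f)"
  using kcat unfolding kcat_def by simp
lemma Comp_Add_right: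
  "f \<in> Hom C a b \<Longrightarrow> f' \<in> Hom C a b \<Longrightarrow> g \<in> Hom C b c \<Longrightarrow>
    Comp C g (Add C f f') = Add C (Comp C g f) (Comp C g f')"
  using kcat unfolding kcat_def by simp
lemma Comp_Smul_left:
  "f \<in> Hom C a b \<Longrightarrow> g \<in> Hom C b c \<Longrightarrow> Comp C (Smul C k g) f = Smul C k (Comp C g f)"
  using kcat unfolding kcat_def by simp
lemma Comp_Smul_right:
  "f \<in> Hom C a b \<Longrightarrow> g \<in> Hom C b c \<Longrightarrow> Comp C g (Smul C k f) = Smul C k (Comp C g f)"
  using kcat unfolding kcat_def by simp

lemma Add_Zero_Zero [simp]: "Add C (Zero C a b) (Zero C a b) = Zero C a b"
  by (rule Add_Zero[OF Zero_in])

lemma Zero_Add: "f \<in> Hom C a b \<Longrightarrow> Add C (Zero C a b) f = f"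
  using Add_commute[OF Zero_in] Add_Zero by simp

lemma Smul_zero: "f \<in> Hom C a b \<Longrightarrow> Smul C 0 f = Zero C a b"
  using Smul_add[of f a b 1 "-1"] Smul_one Add_neg by simp

lemma Smul_Zero [simp]: "Smul C c (Zero C a b) = Zero C a b"
  using Smul_Smul[OF Zero_in, of c 0] Smul_zero[OF Zero_in] by simp

lemma Comp_Zero_right:
  assumes "g \<in> Hom C b c" shows "Comp C g (Zero C a b) = Zero C a c"
proof -
  have "Comp C g (Zero C a b) = Comp C g (Smul C 0 (Zero C a b))" by simp
  also have "\<dots> = Zero C a c"
    using Comp_Smul_right[OF Zero_in assms] Smul_zero[OF Comp_in[OF Zero_in assms]] by simp
  finally show ?thesis .
qed

lemma Comp_Zero_left:
  assumes "f \<in> Hom C a b" shows "Comp C (Zero C b c) f = Zero C a c"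
proof -
  have "Comp C (Zero C b c) f = Comp C (Smul C 0 (Zero C b c)) f" by simp
  also have "\<dots> = Zero C a c"
    using Comp_Smul_left[OF assms Zero_in] Smul_zero[OF Comp_in[OF assms Zero_in]] by simp
  finally show ?thesis .
qed

lemma Add_Add_commute:
  assumes f: "f \<in> Hom C a b" and g: "g \<in> Hom C a b" and h: "h \<in> Hom C a b" and k: "k \<in> Hom C a b"
  shows "Add C (Add C f g) (Add C h k) = Add C (Add C f h) (Add C g k)"
proof -
  have "Add C (Add C f g) (Add C h k) = Add C f (Add C (Add C g h) k)"
    using Add_assoc[OF f g Add_in[OF h k]] Add_assoc[OF g h k] by simp
  also have "\<dots> = Add C f (Add C (Add C h g) k)" using Add_commute[OF g h] by simp
  also have "\<dots> = Add C (Add C f h) (Add C g k)"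
    using Add_assoc[OF f h Add_in[OF g k]] Add_assoc[OF h g k] by simp
  finally show ?thesis .
qed

lemma eq_Sub_if_Sub_eq:
  assumes f: "f \<in> Hom C a b" and g: "g \<in> Hom C a b" and "Sub C f g = h"
  shows "g = Sub C f h"
proof -
  have "Sub C f h = Add C f (Add C (Smul C (-1) f) g)"
    unfolding Sub_def assms(3)[symmetric]
    by (simp add: Smul_Add[OF f Smul_in[OF g]] Smul_Smul[OF g] Smul_one[OF g])
  also have "\<dots> = g"
    using Add_assoc[OF f Smul_in[OF f] g, symmetric] Add_neg[OF f] Zero_Add[OF g] by simp
  finally show ?thesis by simp
qed

lemma Comp_Sub_left:
  assumes "f \<in> Hom C a b" "g \<in> Hom C b c" "g' \<in> Hom C b c"
  shows "Comp C (Sub C g g') f = Sub C (Comp C g f) (Comp C g' f)"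
  unfolding Sub_def by (simp only: Comp_Add_left[OF assms(1,2) Smul_in[OF assms(3)]] Comp_Smul_left[OF assms(1,3)])

lemma lin_comb_Nil [simp]: "lin_comb C a b [] = Zero C a b"
  unfolding lin_comb_def by simp

lemma lin_comb_Cons [simp]: "lin_comb C a b ((c, f) # cs) = Add C (Smul C c f) (lin_comb C a b cs)"
  unfolding lin_comb_def by simp

lemma lin_comb_in [simp, intro]: "snd ` set cs \<subseteq> Hom C a b \<Longrightarrow> lin_comb C a b cs \<in> Hom C a b"
  by (induction cs) auto

lemma lin_comb_add_coeffs:
  assumes "\<And>i. i \<in> set xs \<Longrightarrow> F i \<in> Hom C a b"
  shows "lin_comb C a b (map (\<lambda>i. (c i + d i, F i)) xs) =
    Add C (lin_comb C a b (map (\<lambda>i. (c i, F i)) xs)) (lin_comb C a b (map (\<lambda>i. (d i, F i)) xs))"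
  using assms
proof (induction xs)
  case (Cons y xs)
  have F: "F y \<in> Hom C a b" using Cons.prems by simp
  have "lin_comb C a b (map (\<lambda>i. (c i, F i)) xs) \<in> Hom C a b"
    "lin_comb C a b (map (\<lambda>i. (d i, F i)) xs) \<in> Hom C a b"
    using Cons.prems by (auto intro!: lin_comb_in)
  with Cons show ?case
    using Smul_add[OF F] Add_Add_commute[OF Smul_in[OF F] Smul_in[OF F]] by simp
qed simp

lemma lin_comb_smult_coeffs:
  assumes "\<And>i. i \<in> set xs \<Longrightarrow> F i \<in> Hom C a b"
  shows "lin_comb C a b (map (\<lambda>i. (r * c i, F i)) xs) = Smul C r (lin_comb C a b (map (\<lambda>i. (c i, F i)) xs))"
  using assms
proof (induction xs)
  case (Cons y xs)
  have F: "F y \<in> Hom C a b" using Cons.prems by simp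
  have "lin_comb C a b (map (\<lambda>i. (c i, F i)) xs) \<in> Hom C a b"
    using Cons.prems by (auto intro!: lin_comb_in)
  with Cons show ?case using Smul_Add[OF Smul_in[OF F]] Smul_Smul[OF F] by simp
qed simp

lemma lin_comb_zero_coeffs:
  assumes "\<And>i. i \<in> set xs \<Longrightarrow> F i \<in> Hom C a b"
  shows "lin_comb C a b (map (\<lambda>i. (0, F i)) xs) = Zero C a b"
  using assms
proof (induction xs)
  case (Cons y xs)
  then show ?case using Smul_zero[of "F y" a b] Add_Zero[OF Zero_in] by simp
qed simp

lemma lin_comb_append_zero_coeffs:
  assumes "\<And>i. i \<in> set xs \<Longrightarrow> F i \<in> Hom C a b"
  shows "lin_comb C a b (cs @ map (\<lambda>i. (0, F i)) xs) = lin_comb C a b cs"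
  using lin_comb_zero_coeffs[of xs F a b, OF assms] unfolding lin_comb_def by simp

lemma lin_comb_Comp_left:
  assumes "g \<in> Hom C b d" "snd ` set cs \<subseteq> Hom C a b"
  shows "Comp C g (lin_comb C a b cs) = lin_comb C a d (map (\<lambda>(c, f). (c, Comp C g f)) cs)"
  using assms(2)
proof (induction cs)
  case Nil then show ?case using Comp_Zero_right[OF assms(1)] by simp
next
  case (Cons cf cs)
  obtain c f where cf: "cf = (c, f)" by fastforce
  with Cons.prems have f: "f \<in> Hom C a b" and cs: "snd ` set cs \<subseteq> Hom C a b" by auto
  with Cons.IH cf show ?case
    using Comp_Add_right[OF Smul_in[OF f] lin_comb_in[OF cs] assms(1)] Comp_Smul_right[OF f assms(1)]
    by simp
qed

lemma lin_comb_delta: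
  assumes "distinct xs" "\<And>i. i \<in> set xs \<Longrightarrow> F i \<in> Hom C a b" "j \<in> set xs"
  shows "lin_comb C a b (map (\<lambda>i. (if j = i then c else 0, F i)) xs) = Smul C c (F j)"
  using assms
proof (induction xs)
  case (Cons y xs)
  have F: "F y \<in> Hom C a b" "F j \<in> Hom C a b" using Cons.prems by auto
  show ?case
  proof (cases "y = j")
    case True
    with Cons.prems have "map (\<lambda>i. (if j = i then c else 0, F i)) xs = map (\<lambda>i. (0, F i)) xs"
      by (intro map_cong) auto
    then have "lin_comb C a b (map (\<lambda>i. (if j = i then c else 0, F i)) xs) = Zero C a b"
      using lin_comb_zero_coeffs[of xs F a b] Cons.prems by (simp only:) simp
    with True show ?thesis using Add_Zero[OF Smul_in[OF F(1)]] by simp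
  next
    case False
    with Cons show ?thesis using Smul_zero[OF F(1)] Zero_Add[OF Smul_in[OF F(2)]] by simp
  qed
qed simp

subsection \<open>Polynomials evaluated at endomorphisms\<close>

lemma mpow_0 [simp]: "mpow C a f 0 = Id C a"
  unfolding mpow_def by simp

lemma mpow_Suc: "mpow C a f (Suc n) = Comp C f (mpow C a f n)"
  unfolding mpow_def by simp

lemma mpow_in [simp, intro]: "f \<in> Hom C a a \<Longrightarrow> mpow C a f n \<in> Hom C a a"
  by (induction n) (auto simp: mpow_Suc)

context
  fixes a f
  assumes f: "f \<in> Hom C a a"
begin

lemma poly_eval_in [simp, intro]: "poly_eval C a p f \<in> Hom C a a"
  unfolding poly_eval_def using f by (intro lin_comb_in) auto

lemma poly_eval_upt:
  assumes "degree p < n"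
  shows "poly_eval C a p f = lin_comb C a a (map (\<lambda>i. (coeff p i, mpow C a f i)) [0..<n])"
proof -
  let ?G = "\<lambda>i. (coeff p i, mpow C a f i)"
  have "[0..<n] = [0..<Suc (degree p)] @ [Suc (degree p)..<n]"
    using assms upt_add_eq_append[of 0 "Suc (degree p)" "n - Suc (degree p)"] by simp
  moreover have "map ?G [Suc (degree p)..<n] = map (\<lambda>i. (0, mpow C a f i)) [Suc (degree p)..<n]"
    by (simp add: coeff_eq_0)
  ultimately have "map ?G [0..<n] = map ?G [0..<Suc (degree p)] @ map (\<lambda>i. (0, mpow C a f i)) [Suc (degree p)..<n]"
    by (simp del: upt_Suc)
  then show ?thesis
    unfolding poly_eval_def using lin_comb_append_zero_coeffs[of _ "mpow C a f" a a] f by (simp del: upt_Suc)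
qed

lemma poly_eval_add: "poly_eval C a (p + q) f = Add C (poly_eval C a p f) (poly_eval C a q f)"
proof -
  define n where "n = Suc (max (degree p) (degree q))"
  have "degree (p + q) < n" "degree p < n" "degree q < n"
    using degree_add_le_max[of p q] unfolding n_def by simp_all
  then show ?thesis
    using lin_comb_add_coeffs[of "[0..<n]" "mpow C a f" a a "coeff p" "coeff q"] f
    by (simp add: poly_eval_upt del: upt_Suc)
qed

lemma poly_eval_smult: "poly_eval C a (smult c p) f = Smul C c (poly_eval C a p f)"
proof -
  have "degree (smult c p) < Suc (degree p)" using degree_smult_le[of c p] by simp
  then have "poly_eval C a (smult c p) f =
      lin_comb C a a (map (\<lambda>i. (c * coeff p i, mpow C a f i)) [0..<Suc (degree p)])"
    by (simp add: poly_eval_upt del: upt_Suc)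
  also have "\<dots> = Smul C c (poly_eval C a p f)"
    unfolding poly_eval_def using f by (intro lin_comb_smult_coeffs) auto
  finally show ?thesis .
qed

lemma poly_eval_0 [simp]: "poly_eval C a 0 f = Zero C a a"
  using poly_eval_smult[of 0 0] Smul_zero[OF poly_eval_in] by simp

lemma poly_eval_pCons:
  "poly_eval C a (pCons c p) f = Add C (Smul C c (Id C a)) (Comp C f (poly_eval C a p f))"
proof -
  let ?n = "Suc (degree p)"
  have "[0..<Suc ?n] = 0 # map Suc [0..<?n]" by (simp del: upt_Suc add: upt_conv_Cons map_Suc_upt)
  then have "poly_eval C a (pCons c p) f = Add C (Smul C c (Id C a))
      (lin_comb C a a (map (\<lambda>i. (coeff p i, Comp C f (mpow C a f i))) [0..<?n]))"
    using poly_eval_upt[of "pCons c p" "Suc ?n"] by (simp add: mpow_Suc o_def del: upt_Suc)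
  also have "lin_comb C a a (map (\<lambda>i. (coeff p i, Comp C f (mpow C a f i))) [0..<?n]) =
      Comp C f (poly_eval C a p f)"
    unfolding poly_eval_def using lin_comb_Comp_left[OF f] f by (simp add: image_subset_iff o_def del: upt_Suc)
  finally show ?thesis .
qed

lemma poly_eval_const: "poly_eval C a [:c:] f = Smul C c (Id C a)"
  using poly_eval_pCons[of c 0] Comp_Zero_right[OF f] Add_Zero[OF Smul_in[OF Id_in]] by simp

lemma poly_eval_1 [simp]: "poly_eval C a 1 f = Id C a"
  using poly_eval_const[of 1] Smul_one[OF Id_in] by (simp add: one_pCons)

lemma poly_eval_pCons_0: "poly_eval C a (pCons 0 p) f = Comp C f (poly_eval C a p f)"
  using poly_eval_pCons[of 0 p] Smul_zero[OF Id_in] Zero_Add[OF Comp_in[OF poly_eval_in f]] by simp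

lemma poly_eval_x: "poly_eval C a [:0, 1:] f = f"
  using poly_eval_pCons_0[of 1] poly_eval_1 Comp_Id[OF f] by (simp only: one_pCons)

lemma poly_eval_mult: "poly_eval C a (p * q) f = Comp C (poly_eval C a p f) (poly_eval C a q f)"
proof (induction p rule: pCons_induct)
  case 0
  then show ?case using Comp_Zero_left[OF poly_eval_in] by simp
next
  case (pCons c p)
  have "poly_eval C a (pCons c p * q) f =
      Add C (Smul C c (poly_eval C a q f)) (Comp C f (Comp C (poly_eval C a p f) (poly_eval C a q f)))"
    using pCons.IH by (simp add: poly_eval_add poly_eval_smult poly_eval_pCons_0)
  also have "\<dots> = Comp C (poly_eval C a (pCons c p) f) (poly_eval C a q f)"
    unfolding poly_eval_pCons
    using Comp_Add_left[OF poly_eval_in Smul_in[OF Id_in] Comp_in[OF poly_eval_in f]]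
      Comp_Smul_left[OF poly_eval_in Id_in] Id_Comp[OF poly_eval_in]
      Comp_assoc[OF poly_eval_in poly_eval_in f]
    by simp
  finally show ?case .
qed

lemma poly_eval_commute: "Comp C (poly_eval C a p f) f = Comp C f (poly_eval C a p f)"
  using poly_eval_mult[of p "[:0, 1:]"] poly_eval_mult[of "[:0, 1:]" p]
  by (simp add: poly_eval_x mult.commute)

lemma poly_eval_diff: "poly_eval C a (p - q) f = Sub C (poly_eval C a p f) (poly_eval C a q f)"
  using poly_eval_add[of p "smult (-1) q"] poly_eval_smult[of "-1" q] unfolding Sub_def by simp

lemma poly_eval_eq_iff_diff_eq_Zero:
  "poly_eval C a p f = poly_eval C a q f \<longleftrightarrow> poly_eval C a (p - q) f = Zero C a a"
proof
  assume "poly_eval C a p f = poly_eval C a q f"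
  then show "poly_eval C a (p - q) f = Zero C a a"
    unfolding poly_eval_diff Sub_def using Add_neg[OF poly_eval_in] by simp
next
  assume "poly_eval C a (p - q) f = Zero C a a"
  then show "poly_eval C a p f = poly_eval C a q f"
    using poly_eval_add[of q "p - q"] Add_Zero[OF poly_eval_in] by simp
qed

end

text \<open>Polynomials of degree \<open>< N\<close> serve as coordinate vectors for a spanning list of length \<open>N\<close>.\<close>

lemma fin_dim_hom_coordinates:
  assumes "fin_dim_hom C a b"
  obtains \<Phi> :: "'k poly \<Rightarrow> 'm" and N
  where "\<And>q. \<Phi> q \<in> Hom C a b" "\<And>p q. \<Phi> (p + q) = Add C (\<Phi> p) (\<Phi> q)"
    "\<And>c p. \<Phi> (smult c p) = Smul C c (\<Phi> p)" "\<Phi> 0 = Zero C a b"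
    "\<And>g. g \<in> Hom C a b \<Longrightarrow> \<exists>q\<in>polys_below N. g = \<Phi> q"
proof -
  obtain S where S: "finite S" "S \<subseteq> Hom C a b"
    and spans: "\<And>g. g \<in> Hom C a b \<Longrightarrow> \<exists>cs. set (map snd cs) \<subseteq> S \<and> g = lin_comb C a b cs"
    using assms unfolding fin_dim_hom_def by blast
  obtain ss where ss: "set ss = S" "distinct ss" using finite_distinct_list[OF S(1)] by blast
  define N where "N = length ss"
  have ss_in: "\<And>j. j \<in> set [0..<N] \<Longrightarrow> ss ! j \<in> Hom C a b" using ss S(2) unfolding N_def by auto
  define \<Phi> where "\<Phi> q = lin_comb C a b (map (\<lambda>j. (coeff q j, ss ! j)) [0..<N])" for q :: "'k poly"
  have \<Phi>_add: "\<Phi> (p + q) = Add C (\<Phi> p) (\<Phi> q)" for p q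
    unfolding \<Phi>_def coeff_add by (rule lin_comb_add_coeffs[OF ss_in])
  have \<Phi>_0: "\<Phi> 0 = Zero C a b"
    unfolding \<Phi>_def using lin_comb_zero_coeffs[of "[0..<N]" "\<lambda>j. ss ! j" a b] ss_in by simp
  have \<Phi>_monom: "\<Phi> (monom c j) = Smul C c (ss ! j)" if "j < N" for c j
    unfolding \<Phi>_def coeff_monom using lin_comb_delta[of "[0..<N]" "\<lambda>j. ss ! j" a b j c] ss_in that
    by simp
  have lin_comb_coords: "\<exists>q\<in>polys_below N. lin_comb C a b cs = \<Phi> q" if "set (map snd cs) \<subseteq> S" for cs
    using that
  proof (induction cs)
    case Nil
    then show ?case using \<Phi>_0 by (intro bexI[of _ 0]) (auto simp: polys_below_def)
  next
    case (Cons cg cs)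
    obtain c g where cg: "cg = (c, g)" by fastforce
    then obtain j where j: "j < N" "g = ss ! j"
      using Cons.prems ss(1) unfolding N_def by (auto simp: in_set_conv_nth)
    obtain q where q: "q \<in> polys_below N" "lin_comb C a b cs = \<Phi> q" using Cons by auto
    have "lin_comb C a b (cg # cs) = \<Phi> (monom c j + q)"
      using cg j q \<Phi>_monom \<Phi>_add by simp
    moreover have "monom c j + q \<in> polys_below N"
      using q(1) j(1) unfolding polys_below_def by (simp add: coeff_monom)
    ultimately show ?case by blast
  qed
  have \<Phi>_onto: "\<exists>q\<in>polys_below N. g = \<Phi> q" if "g \<in> Hom C a b" for g
  proof -
    from spans[OF that] obtain cs where cs: "set (map snd cs) \<subseteq> S" "g = lin_comb C a b cs" by blast
    show ?thesis using lin_comb_coords[OF cs(1)] cs(2) by simp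
  qed
  have \<Phi>_in: "\<Phi> q \<in> Hom C a b" for q unfolding \<Phi>_def using ss_in by (intro lin_comb_in) auto
  have \<Phi>_smult: "\<Phi> (smult c p) = Smul C c (\<Phi> p)" for c p
    unfolding \<Phi>_def coeff_smult by (rule lin_comb_smult_coeffs[OF ss_in])
  show thesis by (rule that[OF \<Phi>_in \<Phi>_add \<Phi>_smult \<Phi>_0 \<Phi>_onto])
qed

lemma ex_poly_eval_eq_Zero:
  assumes f: "f \<in> Hom C a a" and fin: "fin_dim_hom C a a"
  shows "\<exists>p. p \<noteq> 0 \<and> poly_eval C a p f = Zero C a a"
proof -
  obtain \<Phi> N where \<Phi>: "\<And>q. \<Phi> q \<in> Hom C a a" "\<And>p q. \<Phi> (p + q) = Add C (\<Phi> p) (\<Phi> q)"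
      "\<And>c p. \<Phi> (smult c p) = Smul C c (\<Phi> p)" "\<Phi> 0 = Zero C a a"
      "\<And>g. g \<in> Hom C a a \<Longrightarrow> \<exists>q\<in>polys_below N. g = \<Phi> q"
    by (rule fin_dim_hom_coordinates[OF fin]) (rule that)
  have \<Phi>_lin_comb: "lin_comb C a a (map (\<lambda>i. (c i, \<Phi> (h i))) xs) = \<Phi> (\<Sum>i\<leftarrow>xs. smult (c i) (h i))"
    for c h and xs :: "nat list"
    by (induction xs) (simp_all add: \<Phi>)
  have "\<forall>i. \<exists>q. q \<in> polys_below N \<and> mpow C a f i = \<Phi> q"
    using \<Phi>(5)[OF mpow_in[OF f]] by blast
  then obtain g where g: "\<And>i. g i \<in> polys_below N" "\<And>i. mpow C a f i = \<Phi> (g i)"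
    by metis
  \<comment> \<open>\<open>\<Lambda>\<close> maps \<open>N + 1\<close> coordinates to \<open>N\<close>, so it kills some \<open>p \<noteq> 0\<close>;
    then \<open>p(f) = \<Phi> (\<Lambda> p) = 0\<close>.\<close>
  define \<Lambda> where "\<Lambda> p = (\<Sum>i<Suc N. smult (coeff p i) (g i))" for p :: "'k poly"
  have \<Lambda>_lin: "Vector_Spaces.linear smult smult \<Lambda>"
    by (rule poly_vs_linearI)
      (simp_all add: \<Lambda>_def smult_add_left sum.distrib poly_vs.scale_sum_right del: sum.lessThan_Suc)
  have "\<Lambda> p \<in> polys_below N" for p
    unfolding \<Lambda>_def using g(1) subspace_polys_below
    by (intro poly_vs.subspace_sum poly_vs.subspace_scale) auto
  then have "\<Lambda> ` polys_below (Suc N) \<subseteq> polys_below N" by blast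
  then have "poly_vs.dim (\<Lambda> ` polys_below (Suc N)) \<le> poly_vs.dim (polys_below N :: 'k poly set)"
    by (rule poly_vs.dim_le_dim_if_subset[OF _ finite_imageI[OF finite_lessThan] polys_below_subset_span])
  then have "poly_vs.dim (\<Lambda> ` polys_below (Suc N)) \<le> N" by (simp add: dim_polys_below)
  then have "poly_vs.dim {p\<in>polys_below (Suc N). \<Lambda> p = 0} \<noteq> 0"
    using poly_vs.rank_nullity[OF \<Lambda>_lin subspace_polys_below finite_imageI polys_below_subset_span,
        of "Suc N"]
    by (simp add: dim_polys_below)
  then have "\<not> {p\<in>polys_below (Suc N). \<Lambda> p = 0} \<subseteq> poly_vs.span {}"
    using poly_vs.dim_le_card[of _ "{}"] by (metis card.empty finite.emptyI le_zero_eq)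
  then obtain p where p: "p \<in> polys_below (Suc N)" "p \<noteq> 0" "\<Lambda> p = 0"
    by auto
  have "poly_eval C a p f = lin_comb C a a (map (\<lambda>i. (coeff p i, \<Phi> (g i))) [0..<Suc N])"
    using p(1,2) g(2) unfolding polys_below_iff by (simp add: poly_eval_upt[OF f] del: upt_Suc)
  also have "\<dots> = \<Phi> (\<Lambda> p)"
    unfolding \<Phi>_lin_comb \<Lambda>_def interv_sum_list_conv_sum_set_nat by (simp add: atLeast0LessThan add.commute)
  finally show ?thesis using p \<Phi>(4) by auto
qed

context
  fixes a f
  assumes f: "f \<in> Hom C a a"
begin

lemma monic_annihilator:
  assumes "r \<noteq> 0" "poly_eval C a r f = Zero C a a"
  defines "r' \<equiv> smult (inverse (lead_coeff r)) r"
  shows "lead_coeff r' = 1" "poly_eval C a r' f = Zero C a a" "degree r' = degree r"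
  using assms(1) unfolding r'_def poly_eval_smult[OF f] assms(2) by simp_all

lemma degree_le_if_is_min_poly:
  assumes "is_min_poly C a f p" "r \<noteq> 0" "poly_eval C a r f = Zero C a a"
  shows "degree p \<le> degree r"
proof -
  have "degree p \<le> degree (smult (inverse (lead_coeff r)) r)"
    using assms(1) monic_annihilator(1,2)[OF assms(2,3)] unfolding is_min_poly_def by blast
  then show ?thesis using monic_annihilator(3)[OF assms(2,3)] by simp
qed

lemma is_min_poly_unique:
  assumes p: "is_min_poly C a f p" and q: "is_min_poly C a f q"
  shows "p = q"
proof (rule ccontr)
  assume "p \<noteq> q"
  have "degree p = degree q"
    using p q unfolding is_min_poly_def by (simp add: le_antisym)
  moreover have "lead_coeff p = 1" "lead_coeff q = 1"
    using p q unfolding is_min_poly_def by auto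
  ultimately have "coeff (p - q) (degree p) = 0" "degree (p - q) \<le> degree p"
    by (simp_all add: degree_diff_le)
  moreover have "p - q \<noteq> 0" using \<open>p \<noteq> q\<close> by simp
  ultimately have "degree (p - q) < degree p"
    using leading_coeff_0_iff le_neq_implies_less by metis
  moreover have "poly_eval C a p f = poly_eval C a q f"
    using p q unfolding is_min_poly_def by simp
  then have "poly_eval C a (p - q) f = Zero C a a"
    using poly_eval_eq_iff_diff_eq_Zero[OF f] by blast
  ultimately show False
    using degree_le_if_is_min_poly[OF p \<open>p - q \<noteq> 0\<close>] by simp
qed

context
  assumes fin: "fin_dim_hom C a a"
begin

lemma ex_is_min_poly: "\<exists>p. is_min_poly C a f p"
proof -
  let ?P = "\<lambda>p. lead_coeff p = 1 \<and> poly_eval C a p f = Zero C a a"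
  obtain r where "r \<noteq> 0" "poly_eval C a r f = Zero C a a"
    using ex_poly_eval_eq_Zero[OF f fin] by blast
  then have "?P (smult (inverse (lead_coeff r)) r)" using monic_annihilator by blast
  then obtain p where "?P p" "\<forall>q. ?P q \<longrightarrow> degree p \<le> degree q"
    using ex_has_least_nat[of ?P _ degree] by blast
  then show ?thesis unfolding is_min_poly_def by blast
qed

lemma is_min_poly_min_poly: "is_min_poly C a f (min_poly C a f)"
proof -
  have "\<exists>!p. is_min_poly C a f p" using ex_is_min_poly is_min_poly_unique by blast
  then show ?thesis unfolding min_poly_def by (rule theI')
qed

lemma poly_eval_eq_Zero_iff: "poly_eval C a p f = Zero C a a \<longleftrightarrow> min_poly C a f dvd p"
proof
  let ?m = "min_poly C a f"
  have m: "lead_coeff ?m = 1" "poly_eval C a ?m f = Zero C a a"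
    using is_min_poly_min_poly unfolding is_min_poly_def by auto
  assume zero: "poly_eval C a p f = Zero C a a"
  have "poly_eval C a p f = Add C (poly_eval C a (p div ?m * ?m) f) (poly_eval C a (p mod ?m) f)"
    using poly_eval_add[OF f, of "p div ?m * ?m" "p mod ?m"] by simp
  then have "poly_eval C a (p mod ?m) f = Zero C a a"
    using zero m poly_eval_mult[OF f] Comp_Zero_right[OF poly_eval_in[OF f]] Zero_Add[OF poly_eval_in[OF f]]
    by simp
  have "p mod ?m = 0"
  proof (rule ccontr)
    assume "p mod ?m \<noteq> 0"
    moreover have "?m \<noteq> 0" using m(1) by auto
    ultimately have "degree (p mod ?m) < degree ?m" using degree_mod_less' by blast
    moreover have "degree ?m \<le> degree (p mod ?m)"
      using degree_le_if_is_min_poly[OF is_min_poly_min_poly] \<open>p mod ?m \<noteq> 0\<close>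
        \<open>poly_eval C a (p mod ?m) f = Zero C a a\<close> by blast
    ultimately show False by simp
  qed
  then show "?m dvd p" by auto
next
  assume "min_poly C a f dvd p"
  then obtain k where "p = k * min_poly C a f" by (metis dvd_def mult.commute)
  then show "poly_eval C a p f = Zero C a a"
    using is_min_poly_min_poly poly_eval_mult[OF f] Comp_Zero_right[OF poly_eval_in[OF f]]
    unfolding is_min_poly_def by simp
qed

lemma poly_eval_eq_iff: "poly_eval C a p f = poly_eval C a q f \<longleftrightarrow> min_poly C a f dvd p - q"
  using poly_eval_eq_iff_diff_eq_Zero[OF f] poly_eval_eq_Zero_iff by simp

end

end

end

section \<open>Nil-Brauer module categories\<close>

locale nb_module =
  fixes C :: "('o, 'm, 'k::field) kcat" and t :: nat
    and Bo :: "'o \<Rightarrow> 'o" and Bm :: "'m \<Rightarrow> 'm" and x tau cap cup :: "'o \<Rightarrow> 'm"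
  assumes NB: "NB_module C t Bo Bm x tau cap cup"

sublocale nb_module \<subseteq> klinear_category C
  using NB unfolding NB_module_def klinear_category_def by simp

context nb_module
begin

lemma B_functor: "klin_endofunctor C Bo Bm"
  using NB unfolding NB_module_def by simp

lemma B_in [intro]: "f \<in> Hom C a b \<Longrightarrow> Bm f \<in> Hom C (Bo a) (Bo b)"
  using B_functor unfolding klin_endofunctor_def by blast
lemma B_Id [simp]: "Bm (Id C a) = Id C (Bo a)"
  using B_functor unfolding klin_endofunctor_def by blast
lemma B_Comp: "f \<in> Hom C a b \<Longrightarrow> g \<in> Hom C b c \<Longrightarrow> Bm (Comp C g f) = Comp C (Bm g) (Bm f)"
  using B_functor unfolding klin_endofunctor_def by blast
lemma B_Add: "f \<in> Hom C a b \<Longrightarrow> g \<in> Hom C a b \<Longrightarrow> Bm (Add C f g) = Add C (Bm f) (Bm g)"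
  using B_functor unfolding klin_endofunctor_def by blast
lemma B_Smul: "f \<in> Hom C a b \<Longrightarrow> Bm (Smul C c f) = Smul C c (Bm f)"
  using B_functor unfolding klin_endofunctor_def by blast

lemma B_Zero [simp]: "Bm (Zero C a b) = Zero C (Bo a) (Bo b)"
  using B_Smul[OF Zero_in, of 0 a b] Smul_zero[OF B_in[OF Zero_in]] by simp

lemma x_in [simp, intro]: "x a \<in> Hom C (Bo a) (Bo a)"
  and tau_in [simp, intro]: "tau a \<in> Hom C (Bo (Bo a)) (Bo (Bo a))"
  and cap_in [simp, intro]: "cap a \<in> Hom C (Bo (Bo a)) a"
  and cup_in [simp, intro]: "cup a \<in> Hom C a (Bo (Bo a))"
  using NB unfolding NB_module_def by blast+

lemma x_natural: "f \<in> Hom C a b \<Longrightarrow> Comp C (x b) (Bm f) = Comp C (Bm f) (x a)"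
  and tau_natural: "f \<in> Hom C a b \<Longrightarrow> Comp C (tau b) (Bm (Bm f)) = Comp C (Bm (Bm f)) (tau a)"
  and cap_natural: "f \<in> Hom C a b \<Longrightarrow> Comp C (cap b) (Bm (Bm f)) = Comp C f (cap a)"
  and cup_natural: "f \<in> Hom C a b \<Longrightarrow> Comp C (cup b) f = Comp C (Bm (Bm f)) (cup a)"
  using NB unfolding NB_module_def by blast+

lemma tau_tau: "Comp C (tau a) (tau a) = Zero C (Bo (Bo a)) (Bo (Bo a))"
  and cap_cup: "Comp C (cap a) (cup a) = Smul C (of_nat t) (Id C a)"
  and cap_Bcup: "Comp C (cap (Bo a)) (Bm (cup a)) = Id C (Bo a)"
  and Bcap_cup: "Comp C (Bm (cap a)) (cup (Bo a)) = Id C (Bo a)"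
  and cap_tau: "Comp C (cap a) (tau a) = Zero C (Bo (Bo a)) a"
  and Bcap_tau: "Comp C (Bm (cap a)) (tau (Bo a)) = Comp C (cap (Bo a)) (Bm (tau a))"
  and dot_slide: "Sub C (Comp C (x (Bo a)) (tau a)) (Comp C (tau a) (Bm (x a)))
      = Sub C (Id C (Bo (Bo a))) (Comp C (cup a) (cap a))"
  and cap_Bx: "Comp C (cap a) (Bm (x a)) = Smul C (-1) (Comp C (cap a) (x (Bo a)))"
  using NB unfolding NB_module_def by blast+

lemma dot_slide_Comp:
  assumes v: "v \<in> Hom C c (Bo (Bo a))"
  shows "Sub C (Comp C (x (Bo a)) (Comp C (tau a) v)) (Comp C (tau a) (Comp C (Bm (x a)) v))
    = Sub C v (Comp C (cup a) (Comp C (cap a) v))"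
proof -
  have "Sub C (Comp C (x (Bo a)) (Comp C (tau a) v)) (Comp C (tau a) (Comp C (Bm (x a)) v))
      = Comp C (Sub C (Comp C (x (Bo a)) (tau a)) (Comp C (tau a) (Bm (x a)))) v"
    using Comp_Sub_left[OF v Comp_in[OF tau_in x_in] Comp_in[OF B_in[OF x_in] tau_in]]
      Comp_assoc[OF v tau_in x_in] Comp_assoc[OF v B_in[OF x_in] tau_in] by simp
  also have "\<dots> = Comp C (Sub C (Id C (Bo (Bo a))) (Comp C (cup a) (cap a))) v"
    by (simp only: dot_slide)
  also have "\<dots> = Sub C v (Comp C (cup a) (Comp C (cap a) v))"
    using Comp_Sub_left[OF v Id_in Comp_in[OF cap_in cup_in]] Id_Comp[OF v] Comp_assoc[OF v cap_in cup_in]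
    by simp
  finally show ?thesis .
qed

text \<open>Since \<open>B\<close> is self-adjoint, a morphism \<open>g: a \<rightarrow> BBa\<close> is recovered from its mate
  \<open>cap\<^bsub>Ba\<^esub> \<circ> B g\<close>.\<close>

lemma mate_inverse:
  assumes g: "g \<in> Hom C a (Bo (Bo a))"
  shows "Comp C (Bm (Comp C (cap (Bo a)) (Bm g))) (cup a) = g"
proof -
  have BBg: "Bm (Bm g) \<in> Hom C (Bo (Bo a)) (Bo (Bo (Bo (Bo a))))" using g by blast
  have Bcap: "Bm (cap (Bo a)) \<in> Hom C (Bo (Bo (Bo (Bo a)))) (Bo (Bo a))" by blast
  have "Comp C (Bm (Comp C (cap (Bo a)) (Bm g))) (cup a) = Comp C (Bm (cap (Bo a))) (Comp C (Bm (Bm g)) (cup a))"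
    using B_Comp[OF B_in[OF g] cap_in] Comp_assoc[OF cup_in BBg Bcap] by simp
  also have "\<dots> = Comp C (Comp C (Bm (cap (Bo a))) (cup (Bo (Bo a)))) g"
    using cup_natural[OF g] Comp_assoc[OF g cup_in Bcap] by simp
  also have "\<dots> = g" using Bcap_cup Id_Comp[OF g] by simp
  finally show ?thesis .
qed

lemma mate_eq_imp_eq:
  assumes g: "g \<in> Hom C a (Bo (Bo a))" and "Comp C (cap (Bo a)) (Bm g) = h"
  shows "g = Comp C (Bm h) (cup a)"
  using mate_inverse[OF g] assms(2) by simp

lemma x_cup: "Comp C (x (Bo a)) (cup a) = Smul C (-1) (Comp C (Bm (x a)) (cup a))"
proof -
  have Bcup: "Bm (cup a) \<in> Hom C (Bo a) (Bo (Bo (Bo a)))" by blast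
  have Bx: "Bm (x (Bo a)) \<in> Hom C (Bo (Bo (Bo a))) (Bo (Bo (Bo a)))" by blast
  have "Comp C (cap (Bo a)) (Bm (Comp C (x (Bo a)) (cup a)))
      = Comp C (Comp C (cap (Bo a)) (Bm (x (Bo a)))) (Bm (cup a))"
    using B_Comp[OF cup_in x_in] Comp_assoc[OF Bcup Bx cap_in] by simp
  also have "\<dots> = Smul C (-1) (Comp C (cap (Bo a)) (Comp C (x (Bo (Bo a))) (Bm (cup a))))"
    using cap_Bx[of "Bo a"] Comp_Smul_left[OF Bcup Comp_in[OF x_in cap_in]] Comp_assoc[OF Bcup x_in cap_in]
    by simp
  also have "\<dots> = Smul C (-1) (Comp C (Comp C (cap (Bo a)) (Bm (cup a))) (x a))"
    using x_natural[OF cup_in[of a]] Comp_assoc[OF x_in Bcup cap_in] by simp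
  also have "\<dots> = Smul C (-1) (x a)"
    using cap_Bcup[of a] Id_Comp[OF x_in] by simp
  finally have "Comp C (cap (Bo a)) (Bm (Comp C (x (Bo a)) (cup a))) = Smul C (-1) (x a)" .
  from mate_eq_imp_eq[OF Comp_in[OF cup_in x_in] this] show ?thesis
    using B_Smul[OF x_in] Comp_Smul_left[OF cup_in B_in[OF x_in]] by simp
qed

lemma tau_Bcup: "Comp C (tau (Bo a)) (Bm (cup a)) = Comp C (Bm (tau a)) (cup (Bo a))"
proof -
  have Bcup: "Bm (cup a) \<in> Hom C (Bo a) (Bo (Bo (Bo a)))" by blast
  have BBcup: "Bm (Bm (cup a)) \<in> Hom C (Bo (Bo a)) (Bo (Bo (Bo (Bo a))))" by blast
  have Btau: "Bm (tau (Bo a)) \<in> Hom C (Bo (Bo (Bo (Bo a)))) (Bo (Bo (Bo (Bo a))))" by blast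
  have Bcap: "Bm (cap (Bo a)) \<in> Hom C (Bo (Bo (Bo (Bo a)))) (Bo (Bo a))" by blast
  have "Comp C (cap (Bo (Bo a))) (Bm (Comp C (tau (Bo a)) (Bm (cup a))))
     = Comp C (Comp C (cap (Bo (Bo a))) (Bm (tau (Bo a)))) (Bm (Bm (cup a)))"
    using B_Comp[OF Bcup tau_in] Comp_assoc[OF BBcup Btau cap_in] by simp
  also have "\<dots> = Comp C (Bm (cap (Bo a))) (Comp C (tau (Bo (Bo a))) (Bm (Bm (cup a))))"
    using Bcap_tau[of "Bo a"] Comp_assoc[OF BBcup tau_in Bcap] by simp
  also have "\<dots> = Comp C (Bm (Comp C (cap (Bo a)) (Bm (cup a)))) (tau a)"
    using tau_natural[OF cup_in[of a]] Comp_assoc[OF tau_in BBcup Bcap] B_Comp[OF Bcup cap_in] by simp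
  also have "\<dots> = tau a"
    using cap_Bcup[of a] Id_Comp[OF tau_in] by simp
  finally show ?thesis by (rule mate_eq_imp_eq[OF Comp_in[OF Bcup tau_in]])
qed

lemma tau_cup: "Comp C (tau a) (cup a) = Zero C a (Bo (Bo a))"
proof -
  have Bcup: "Bm (cup a) \<in> Hom C (Bo a) (Bo (Bo (Bo a)))" by blast
  have Btau: "Bm (tau a) \<in> Hom C (Bo (Bo (Bo a))) (Bo (Bo (Bo a)))" by blast
  have Bcap: "Bm (cap a) \<in> Hom C (Bo (Bo (Bo a))) (Bo a)" by blast
  have "Comp C (cap (Bo a)) (Bm (Comp C (tau a) (cup a)))
      = Comp C (Comp C (cap (Bo a)) (Bm (tau a))) (Bm (cup a))"
    using B_Comp[OF cup_in tau_in] Comp_assoc[OF Bcup Btau cap_in] by simp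
  also have "\<dots> = Comp C (Bm (cap a)) (Comp C (Bm (tau a)) (cup (Bo a)))"
    using Bcap_tau[of a] Comp_assoc[OF Bcup tau_in Bcap] tau_Bcup[of a] by simp
  also have "\<dots> = Comp C (Bm (Comp C (cap a) (tau a))) (cup (Bo a))"
    using Comp_assoc[OF cup_in Btau Bcap] B_Comp[OF tau_in cap_in] by simp
  also have "\<dots> = Zero C (Bo a) (Bo a)"
    using cap_tau[of a] Comp_Zero_left[OF cup_in] by simp
  finally have "Comp C (cap (Bo a)) (Bm (Comp C (tau a) (cup a))) = Zero C (Bo a) (Bo a)" .
  from mate_eq_imp_eq[OF Comp_in[OF cup_in tau_in] this] show ?thesis
    using Comp_Zero_left[OF cup_in] by simp
qed

end

section \<open>Dotted cups at a special object\<close>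

locale nb_module_special = nb_module C t Bo Bm x tau cap cup
  for C :: "('o, 'm, 'k::field) kcat" and t Bo Bm x tau cap cup +
  fixes L :: 'o
  assumes special: "special C Bo L"
begin

abbreviation ev where
  "ev p \<equiv> poly_eval C (Bo L) p (x L)"

abbreviation mp where
  "mp \<equiv> min_poly C (Bo L) (x L)"

lemma End_L: "Hom C L L = range (\<lambda>c. Smul C c (Id C L))"
  and Smul_Id_inj: "Smul C c (Id C L) = Smul C d (Id C L) \<Longrightarrow> c = d"
  and fin_dim_BL: "fin_dim_hom C (Bo L) (Bo L)"
  using special unfolding special_def inj_def by blast+

lemma ev_in [simp, intro]: "ev p \<in> Hom C (Bo L) (Bo L)"
  by (rule poly_eval_in[OF x_in])

lemma ev_eq_iff: "ev p = ev q \<longleftrightarrow> mp dvd p - q"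
  by (rule poly_eval_eq_iff[OF x_in fin_dim_BL])

lemma monic_mp: "lead_coeff mp = 1"
  using is_min_poly_min_poly[OF x_in fin_dim_BL] unfolding is_min_poly_def by blast

definition dotted_cup where
  "dotted_cup p = Comp C (Bm (ev p)) (cup L)"

lemma dotted_cup_in [simp, intro]: "dotted_cup p \<in> Hom C L (Bo (Bo L))"
  unfolding dotted_cup_def by blast

lemma cap_B_dotted_cup: "Comp C (cap (Bo L)) (Bm (dotted_cup p)) = ev p"
proof -
  have Bcup: "Bm (cup L) \<in> Hom C (Bo L) (Bo (Bo (Bo L)))" by blast
  have BBev: "Bm (Bm (ev p)) \<in> Hom C (Bo (Bo (Bo L))) (Bo (Bo (Bo L)))" by blast
  have "Comp C (cap (Bo L)) (Bm (dotted_cup p)) = Comp C (Comp C (cap (Bo L)) (Bm (Bm (ev p)))) (Bm (cup L))"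
    unfolding dotted_cup_def using B_Comp[OF cup_in B_in[OF ev_in]] Comp_assoc[OF Bcup BBev cap_in] by simp
  also have "\<dots> = Comp C (ev p) (Comp C (cap (Bo L)) (Bm (cup L)))"
    using cap_natural[OF ev_in] Comp_assoc[OF Bcup cap_in ev_in] by simp
  also have "\<dots> = ev p" using cap_Bcup Comp_Id[OF ev_in] by simp
  finally show ?thesis .
qed

lemma dotted_cup_eq_iff: "dotted_cup p = dotted_cup q \<longleftrightarrow> mp dvd p - q"
  using cap_B_dotted_cup ev_eq_iff unfolding dotted_cup_def by metis

lemma dotted_cup_add: "dotted_cup (p + q) = Add C (dotted_cup p) (dotted_cup q)"
  unfolding dotted_cup_def poly_eval_add[OF x_in] B_Add[OF ev_in ev_in]
  by (rule Comp_Add_left[OF cup_in B_in B_in]) blast+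

lemma dotted_cup_smult: "dotted_cup (smult c p) = Smul C c (dotted_cup p)"
  unfolding dotted_cup_def poly_eval_smult[OF x_in] B_Smul[OF ev_in]
  by (rule Comp_Smul_left[OF cup_in B_in[OF ev_in]])

lemma dotted_cup_const: "dotted_cup [:c:] = Smul C c (cup L)"
  unfolding dotted_cup_def poly_eval_const[OF x_in] B_Smul[OF Id_in] B_Id
  using Comp_Smul_left[OF cup_in Id_in] Id_Comp[OF cup_in] by simp

lemma dotted_cup_mod: "dotted_cup (p mod mp) = dotted_cup p"
  unfolding dotted_cup_eq_iff by (simp add: mod_eq_dvd_iff[symmetric])

lemma B_x_dotted_cup: "Comp C (Bm (x L)) (dotted_cup p) = dotted_cup (pCons 0 p)"
  unfolding dotted_cup_def poly_eval_pCons_0[OF x_in]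
  using Comp_assoc[OF cup_in B_in[OF ev_in] B_in[OF x_in]] B_Comp[OF ev_in x_in] by simp

lemma x_dotted_cup: "Comp C (x (Bo L)) (dotted_cup p) = Smul C (-1) (dotted_cup (pCons 0 p))"
proof -
  have Bev: "Bm (ev p) \<in> Hom C (Bo (Bo L)) (Bo (Bo L))" by blast
  have Bx: "Bm (x L) \<in> Hom C (Bo (Bo L)) (Bo (Bo L))" by blast
  have "Comp C (x (Bo L)) (dotted_cup p) = Comp C (Bm (ev p)) (Comp C (x (Bo L)) (cup L))"
    unfolding dotted_cup_def
    using Comp_assoc[OF cup_in Bev x_in] x_natural[OF ev_in] Comp_assoc[OF cup_in x_in Bev] by simp
  also have "\<dots> = Smul C (-1) (Comp C (Bm (Comp C (ev p) (x L))) (cup L))"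
    using x_cup[of L] Comp_Smul_right[OF Comp_in[OF cup_in Bx] Bev] Comp_assoc[OF cup_in Bx Bev]
      B_Comp[OF x_in ev_in] by simp
  also have "\<dots> = Smul C (-1) (dotted_cup (pCons 0 p))"
    unfolding dotted_cup_def poly_eval_commute[OF x_in] poly_eval_pCons_0[OF x_in] ..
  finally show ?thesis .
qed

lemma dotted_cup_diff: "dotted_cup (p - q) = Sub C (dotted_cup p) (dotted_cup q)"
  using dotted_cup_add[of p "smult (-1) q"] dotted_cup_smult[of "-1" q] unfolding Sub_def by simp

lemma eq_if_dotted_cup_eq:
  assumes "p \<in> polys_below (degree mp)" "q \<in> polys_below (degree mp)" "dotted_cup p = dotted_cup q"
  shows "p = q"
proof (rule ccontr)
  assume "p \<noteq> q"
  have "p - q \<in> polys_below (degree mp)" using assms(1,2) unfolding polys_below_def by simp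
  then have "degree (p - q) < degree mp" using \<open>p \<noteq> q\<close> unfolding polys_below_iff by simp
  moreover have "mp dvd p - q" using assms(3) unfolding dotted_cup_eq_iff .
  then have "degree mp \<le> degree (p - q)" using \<open>p \<noteq> q\<close> by (simp add: dvd_imp_degree_le)
  ultimately show False by simp
qed

definition bubble where
  "bubble p = (THE c. Comp C (cap L) (dotted_cup p) = Smul C c (Id C L))"

lemma cap_dotted_cup: "Comp C (cap L) (dotted_cup p) = Smul C (bubble p) (Id C L)"
proof -
  have "Comp C (cap L) (dotted_cup p) \<in> Hom C L L" by blast
  then have "\<exists>!c. Comp C (cap L) (dotted_cup p) = Smul C c (Id C L)"
    using End_L Smul_Id_inj by auto
  then show ?thesis unfolding bubble_def by (rule theI')
qed

lemma bubble_eqI: "Comp C (cap L) (dotted_cup p) = Smul C c (Id C L) \<Longrightarrow> bubble p = c"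
  using cap_dotted_cup Smul_Id_inj by metis

lemma bubble_add: "bubble (p + q) = bubble p + bubble q"
  by (rule bubble_eqI)
    (simp add: dotted_cup_add Comp_Add_right[OF dotted_cup_in dotted_cup_in cap_in] cap_dotted_cup
      Smul_add[OF Id_in])

lemma bubble_smult: "bubble (smult c p) = c * bubble p"
  by (rule bubble_eqI)
    (simp add: dotted_cup_smult Comp_Smul_right[OF dotted_cup_in cap_in] cap_dotted_cup Smul_Smul[OF Id_in])

lemma bubble_1: "bubble 1 = of_nat t"
  by (rule bubble_eqI) (simp add: one_pCons dotted_cup_const Smul_one[OF cup_in] cap_cup)

lemma bubble_mod: "bubble (p mod mp) = bubble p"
  unfolding bubble_def dotted_cup_mod ..

lemma tau_dotted_cup_pCons:
  assumes q: "Comp C (tau L) (dotted_cup p) = dotted_cup q"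
  shows "Comp C (tau L) (dotted_cup (pCons 0 p)) = dotted_cup ([:bubble p:] - p - pCons 0 q)"
proof -
  have "Comp C (x (Bo L)) (Comp C (tau L) (dotted_cup p)) = dotted_cup (smult (-1) (pCons 0 q))"
    unfolding q x_dotted_cup dotted_cup_smult ..
  moreover have "Comp C (tau L) (Comp C (Bm (x L)) (dotted_cup p)) = Comp C (tau L) (dotted_cup (pCons 0 p))"
    unfolding B_x_dotted_cup ..
  moreover have "Comp C (cup L) (Comp C (cap L) (dotted_cup p)) = dotted_cup [:bubble p:]"
    unfolding cap_dotted_cup dotted_cup_const using Comp_Smul_right[OF Id_in cup_in] Comp_Id[OF cup_in] by simp
  ultimately have "Sub C (dotted_cup (smult (-1) (pCons 0 q))) (Comp C (tau L) (dotted_cup (pCons 0 p)))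
      = dotted_cup (p - [:bubble p:])"
    using dot_slide_Comp[OF dotted_cup_in, of p] dotted_cup_diff by simp
  then have "Comp C (tau L) (dotted_cup (pCons 0 p))
      = Sub C (dotted_cup (smult (-1) (pCons 0 q))) (dotted_cup (p - [:bubble p:]))"
    by (rule eq_Sub_if_Sub_eq[OF dotted_cup_in Comp_in[OF dotted_cup_in tau_in]])
  also have "\<dots> = dotted_cup (smult (-1) (pCons 0 q) - (p - [:bubble p:]))"
    by (rule dotted_cup_diff[symmetric])
  also have "smult (-1) (pCons 0 q) - (p - [:bubble p:]) = [:bubble p:] - p - pCons 0 q"
    by (simp add: algebra_simps)
  finally show ?thesis .
qed

lemma ex_tau_dotted_cup: "\<exists>q. Comp C (tau L) (dotted_cup p) = dotted_cup q"
proof (induction p rule: pCons_induct)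
  case 0
  have "Comp C (tau L) (dotted_cup 0) = dotted_cup 0"
    using dotted_cup_smult[of 0 0] Smul_zero[OF dotted_cup_in] Comp_Zero_right[OF tau_in] by simp
  then show ?case ..
next
  case (pCons c p)
  then obtain q where q: "Comp C (tau L) (dotted_cup p) = dotted_cup q" by blast
  have "dotted_cup (pCons c p) = Add C (Smul C c (cup L)) (dotted_cup (pCons 0 p))"
    using dotted_cup_add[of "[:c:]" "pCons 0 p"] dotted_cup_const by simp
  then have "Comp C (tau L) (dotted_cup (pCons c p)) = Comp C (tau L) (dotted_cup (pCons 0 p))"
    using Comp_Add_right[OF Smul_in[OF cup_in] dotted_cup_in tau_in]
      Comp_Smul_right[OF cup_in tau_in] tau_cup Zero_Add[OF Comp_in[OF dotted_cup_in tau_in]]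
    by simp
  also have "\<dots> = dotted_cup ([:bubble p:] - p - pCons 0 q)" by (rule tau_dotted_cup_pCons[OF q])
  finally show ?case ..
qed

definition tau_action where
  "tau_action p = (SOME q. Comp C (tau L) (dotted_cup p) = dotted_cup q) mod mp"

lemma tau_dotted_cup: "Comp C (tau L) (dotted_cup p) = dotted_cup (tau_action p)"
  unfolding tau_action_def dotted_cup_mod using someI_ex[OF ex_tau_dotted_cup] .

lemma mod_mp_in: "p mod mp \<in> polys_below (degree mp)"
  using degree_mod_less'[of mp p] monic_mp unfolding polys_below_iff by force

lemma tau_action_in: "tau_action p \<in> polys_below (degree mp)"
  unfolding tau_action_def by (rule mod_mp_in)

lemma tau_action_eqI:
  "q \<in> polys_below (degree mp) \<Longrightarrow> Comp C (tau L) (dotted_cup p) = dotted_cup q \<Longrightarrow> tau_action p = q"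
  using eq_if_dotted_cup_eq[OF tau_action_in] tau_dotted_cup by metis

lemma tau_action_add: "tau_action (p + q) = tau_action p + tau_action q"
proof (rule tau_action_eqI)
  show "tau_action p + tau_action q \<in> polys_below (degree mp)"
    by (rule poly_vs.subspace_add[OF subspace_polys_below tau_action_in tau_action_in])
  show "Comp C (tau L) (dotted_cup (p + q)) = dotted_cup (tau_action p + tau_action q)"
    by (simp add: dotted_cup_add Comp_Add_right[OF dotted_cup_in dotted_cup_in tau_in] tau_dotted_cup)
qed

lemma tau_action_smult: "tau_action (smult c p) = smult c (tau_action p)"
proof (rule tau_action_eqI)
  show "smult c (tau_action p) \<in> polys_below (degree mp)"
    by (rule poly_vs.subspace_scale[OF subspace_polys_below tau_action_in])
  show "Comp C (tau L) (dotted_cup (smult c p)) = dotted_cup (smult c (tau_action p))"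
    by (simp add: dotted_cup_smult Comp_Smul_right[OF dotted_cup_in tau_in] tau_dotted_cup)
qed

lemma tau_action_tau_action: "tau_action (tau_action p) = 0"
proof (rule tau_action_eqI)
  show "0 \<in> polys_below (degree mp)" by (simp add: polys_below_iff)
  have "Comp C (tau L) (dotted_cup (tau_action p)) = Comp C (Comp C (tau L) (tau L)) (dotted_cup p)"
    using tau_dotted_cup Comp_assoc[OF dotted_cup_in tau_in tau_in] by simp
  then show "Comp C (tau L) (dotted_cup (tau_action p)) = dotted_cup 0"
    using tau_tau Comp_Zero_left[OF dotted_cup_in] dotted_cup_smult[of 0 0] Smul_zero[OF dotted_cup_in]
    by simp
qed

lemma tau_action_mod: "tau_action (p mod mp) = tau_action p"
  using tau_action_eqI[OF tau_action_in] tau_dotted_cup dotted_cup_mod by metis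

lemma tau_action_1: "tau_action 1 = 0"
proof (rule tau_action_eqI)
  show "0 \<in> polys_below (degree mp)" by (simp add: polys_below_iff)
  show "Comp C (tau L) (dotted_cup 1) = dotted_cup 0"
    using dotted_cup_const[of 1] Smul_one[OF cup_in] tau_cup dotted_cup_smult[of 0 0] Smul_zero[OF dotted_cup_in]
    by (simp add: one_pCons)
qed

lemma bubble_tau_action: "bubble (tau_action p) = 0"
proof (rule bubble_eqI)
  have "Comp C (cap L) (dotted_cup (tau_action p)) = Comp C (Comp C (cap L) (tau L)) (dotted_cup p)"
    using tau_dotted_cup Comp_assoc[OF dotted_cup_in tau_in cap_in] by simp
  then show "Comp C (cap L) (dotted_cup (tau_action p)) = Smul C 0 (Id C L)"
    using cap_tau Comp_Zero_left[OF dotted_cup_in] Smul_zero[OF Id_in] by simp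
qed

lemma tau_action_x:
  assumes "p \<in> polys_below (degree mp)" "tau_action p = 0"
  shows "tau_action (pCons 0 p mod mp) = smult (bubble p) (1 mod mp) - p"
proof (rule tau_action_eqI)
  show "smult (bubble p) (1 mod mp) - p \<in> polys_below (degree mp)"
    using assms(1) mod_mp_in subspace_polys_below
    by (intro poly_vs.subspace_diff poly_vs.subspace_scale) auto
  have "Comp C (tau L) (dotted_cup (pCons 0 p mod mp)) = dotted_cup ([:bubble p:] - p - pCons 0 0)"
    using tau_dotted_cup_pCons[OF tau_dotted_cup[of p, unfolded assms(2)]] dotted_cup_mod by simp
  also have "\<dots> = dotted_cup (smult (bubble p) (1 mod mp) - p)"
    by (simp add: dotted_cup_diff dotted_cup_smult dotted_cup_mod dotted_cup_const one_pCons Smul_one[OF cup_in])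
  finally show "Comp C (tau L) (dotted_cup (pCons 0 p mod mp)) = dotted_cup (smult (bubble p) (1 mod mp) - p)" .
qed

lemma degree_min_poly_mod_2:
  assumes "t \<in> {0, 1}"
  shows "degree mp mod 2 = t"
proof -
  let ?V = "polys_below (degree mp)" and ?e = "1 mod mp"
  have linear: "Vector_Spaces.linear smult smult tau_action"
    by (rule poly_vs_linearI) (simp_all add: tau_action_add tau_action_smult)
  have maps_to: "tau_action ` ?V \<subseteq> ?V" using tau_action_in by blast
  have e: "tau_action ?e = 0" using tau_action_mod tau_action_1 by simp
  have shift: "smult (bubble p) ?e - p \<in> tau_action ` ?V" if "p \<in> ?V" "tau_action p = 0" for p
    using tau_action_x[OF that, symmetric] mod_mp_in by (rule image_eqI)
  note parity = poly_vs.dim_parity_of_square_zero[OF subspace_polys_below finite_imageI[OF finite_lessThan]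
      polys_below_subset_span linear maps_to tau_action_tau_action bubble_add bubble_smult
      bubble_tau_action mod_mp_in e shift, unfolded dim_polys_below]
  have "bubble ?e = of_nat t" using bubble_mod bubble_1 by simp
  then show ?thesis using parity assms by (auto simp: odd_iff_mod_2_eq_one)
qed

end

theorem corollary3p11:
  fixes C :: "('o, 'm, 'k::field) kcat"
    and t :: nat
    and Bo :: "'o \<Rightarrow> 'o" and Bm :: "'m \<Rightarrow> 'm"
    and x tau cap cup :: "'o \<Rightarrow> 'm"
    and L :: 'o
  assumes char: "(2::'k) \<noteq> 0"
    and t01: "t \<in> {0, 1}"
    and mod: "NB_module C t Bo Bm x tau cap cup"
    and spec: "special C Bo L"
  shows "degree (min_poly C (Bo L) (x L)) mod 2 = t"
proof -
  interpret nb_module_special C t Bo Bm x tau cap cup L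
    using mod spec by (simp add: nb_module_special_def nb_module_def nb_module_special_axioms_def)
  show ?thesis by (rule degree_min_poly_mod_2[OF t01])
qed

end
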